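(* Let $\mathcal{N}=\{1,\dots,N\}$ be a set of clients, let $G$ be a positive integer, and for each $n\in\mathcal{N}$ let $\rho_n>0$, $E_n>0$, $D_n>0$, $C_n\in\mathbb{R}$ and $p\in\mathbb{R}$. Each client $n$ chooses $x_n\in[0,D_n]$ and has cost $$F_n(x_n,\boldsymbol{x}_{-n})=\rho_n\left(\frac{1}{\sqrt{\big(x_n+\sum_{n'\neq n}x_{n'}\big)G}}+\frac{1}{G}\right)+E_nx_n+C_n+p .$$ Then for every $n\in\mathcal{N}$ and every $\boldsymbol{x}_{-n}\in\prod_{n'\neq n}[0,D_{n'}]$, the best response of client $n$ (the minimizer of $F_n(\cdot,\boldsymbol{x}_{-n})$ over $[0,D_n]$) is $$x_n^{\rm BR}(\boldsymbol{x}_{-n})=\min\left\{D_n,\ \max\left\{\sqrt[3]{\frac{\rho_n^2}{4GE_n^2}}-\sum_{n'\in\mathcal{N},n'\neq n}x_{n'},\ 0\right\}\right\}.$$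
   Context: Here $\boldsymbol{x}_{-n}$ denotes the vector of choices of all clients other than $n$. The cost is interpreted as $+\infty$ when $\sum_{n'\in\mathcal{N}}x_{n'}=0$. *)

theory Defs
  imports "HOL-Analysis.Analysis"
begin

text \<open>The value x n itself is ignored.\<close>
definition client_cost ::
  "nat \<Rightarrow> nat \<Rightarrow> (nat \<Rightarrow> real) \<Rightarrow> (nat \<Rightarrow> real) \<Rightarrow> (nat \<Rightarrow> real) \<Rightarrow> real
    \<Rightarrow> nat \<Rightarrow> real \<Rightarrow> (nat \<Rightarrow> real) \<Rightarrow> ereal" where
  "client_cost N G \<rho> E C p n xn x =
     (let s = xn + (\<Sum>n'\<in>{1..N} - {n}. x n') in
      if s = 0 then PInfty
      else ereal (\<rho> n * (1 / sqrt (s * real G) + 1 / real G) + E n * xn + C n + p))"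

end

theory Submission
  imports Defs
begin

text \<open>Writing s = x_n + S for the total contribution (S the others' sum), the cost is, up to
  a constant, \<rho>/sqrt(G s) + E s. Substituting u = sqrt s gives a/u + E u^2, whose difference
  quotient between u < v has the sign of E (u + v) u v - a; hence the cost strictly decreases
  for s \<le> T and strictly increases for s \<ge> T, where T^3 = \<rho>^2/(4 G E^2). On [0, D_n] the
  unique minimizer is therefore T - S clamped to that interval. The infinite cost at s = 0
  sits on the decreasing branch and does not disturb this.\<close>

lemma inverse_plus_square_less_iff:
  fixes a e u v :: real
  assumes "0 < u" "u < v"
  shows "a / v + e * v\<^sup>2 < a / u + e * u\<^sup>2 \<longleftrightarrow> e * (u + v) * (u * v) < a"
    and "a / u + e * u\<^sup>2 < a / v + e * v\<^sup>2 \<longleftrightarrow> a < e * (u + v) * (u * v)"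
proof -
  define q where "q = (v - u) / (u * v)"
  have diff: "(a / v + e * v\<^sup>2) - (a / u + e * u\<^sup>2) = q * (e * (u + v) * (u * v) - a)"
    using assms by (simp add: q_def field_simps power2_eq_square)
  have "0 < q"
    using assms by (simp add: q_def)
  have "q * (e * (u + v) * (u * v) - a) < 0 \<longleftrightarrow> e * (u + v) * (u * v) < a"
    and "0 < q * (e * (u + v) * (u * v) - a) \<longleftrightarrow> a < e * (u + v) * (u * v)"
    using \<open>0 < q\<close> by (simp_all add: mult_less_0_iff zero_less_mult_iff)
  with diff show "a / v + e * v\<^sup>2 < a / u + e * u\<^sup>2 \<longleftrightarrow> e * (u + v) * (u * v) < a"
    and "a / u + e * u\<^sup>2 < a / v + e * v\<^sup>2 \<longleftrightarrow> a < e * (u + v) * (u * v)"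
    by linarith+
qed

lemma inverse_sqrt_plus_linear_strict_mono:
  fixes k e T s t :: real
  assumes "0 < k" "0 < e" "0 < T" "T ^ 3 = k\<^sup>2 / (4 * e\<^sup>2)"
  shows "0 < s \<Longrightarrow> s < t \<Longrightarrow> t \<le> T \<Longrightarrow> k / sqrt t + e * t < k / sqrt s + e * s"
    and "T \<le> s \<Longrightarrow> s < t \<Longrightarrow> k / sqrt s + e * s < k / sqrt t + e * t"
proof -
  define c where "c = sqrt T"
  have "0 < c" using \<open>0 < T\<close> by (simp add: c_def)
  have "k\<^sup>2 = 4 * e\<^sup>2 * (c\<^sup>2) ^ 3"
    using assms by (simp add: c_def)
  also have "\<dots> = (2 * e * c ^ 3)\<^sup>2"
    by (simp add: power_mult_distrib flip: power_mult)
  finally have k: "k = 2 * e * c ^ 3"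
    by (rule power2_eq_imp_eq) (use \<open>0 < k\<close> \<open>0 < e\<close> \<open>0 < c\<close> in auto)
  have below: "e * (u + v) * (u * v) < k" if "0 < u" "u < v" "v \<le> c" for u v
  proof -
    have "(u + v) * (u * v) < (2 * c) * (c * c)"
      using that by (intro mult_strict_mono mult_less_le_imp_less) auto
    then show ?thesis
      using \<open>0 < e\<close> by (simp add: k power3_eq_cube mult.assoc)
  qed
  have above: "k < e * (u + v) * (u * v)" if "c \<le> u" "u < v" for u v
  proof -
    have "(2 * c) * (c * c) < (u + v) * (u * v)"
      using that \<open>0 < c\<close> by (intro mult_strict_mono mult_le_less_imp_less) auto
    then show ?thesis
      using \<open>0 < e\<close> by (simp add: k power3_eq_cube mult.assoc)
  qed
  show "k / sqrt t + e * t < k / sqrt s + e * s" if "0 < s" "s < t" "t \<le> T"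
    using inverse_plus_square_less_iff(1)[of "sqrt s" "sqrt t"] below[of "sqrt s" "sqrt t"]
      that by (simp add: c_def)
  show "k / sqrt s + e * s < k / sqrt t + e * t" if "T \<le> s" "s < t"
    using inverse_plus_square_less_iff(2)[of "sqrt s" "sqrt t"] above[of "sqrt s" "sqrt t"]
      that \<open>0 < T\<close> by (simp add: c_def)
qed

lemma unimodal_minimizers_eq_clamp:
  fixes g :: "real \<Rightarrow> 'a::linorder"
  assumes "a \<le> b"
    and decreasing: "\<And>y z. a \<le> y \<Longrightarrow> y < z \<Longrightarrow> z \<le> m \<Longrightarrow> g z < g y"
    and increasing: "\<And>y z. m \<le> y \<Longrightarrow> y < z \<Longrightarrow> g y < g z"
  shows "{y \<in> {a..b}. \<forall>z\<in>{a..b}. g y \<le> g z} = {min b (max m a)}"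
proof -
  define y0 where "y0 = min b (max m a)"
  have "y0 \<in> {a..b}" using \<open>a \<le> b\<close> by (auto simp: y0_def)
  have strict: "g y0 < g z" if "z \<in> {a..b}" "z \<noteq> y0" for z
  proof (cases "z < y0")
    case True
    then show ?thesis using that by (intro decreasing) (auto simp: y0_def)
  next
    case False
    then show ?thesis using that by (intro increasing) (auto simp: y0_def)
  qed
  show ?thesis
    using \<open>y0 \<in> {a..b}\<close> strict unfolding y0_def[symmetric] by (force simp: not_less)
qed

theorem lemma1:
  fixes N G :: nat and \<rho> E D C :: "nat \<Rightarrow> real" and p :: real
    and n :: nat and x :: "nat \<Rightarrow> real"
  assumes "G > 0"
    and "\<forall>m\<in>{1..N}. \<rho> m > 0 \<and> E m > 0 \<and> D m > 0"
    and "n \<in> {1..N}"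
    and "\<forall>m\<in>{1..N} - {n}. 0 \<le> x m \<and> x m \<le> D m"
  shows "{y \<in> {0..D n}. \<forall>z\<in>{0..D n}.
            client_cost N G \<rho> E C p n y x \<le> client_cost N G \<rho> E C p n z x}
         = {min (D n) (max (root 3 ((\<rho> n)\<^sup>2 / (4 * real G * (E n)\<^sup>2))
                              - (\<Sum>m\<in>{1..N} - {n}. x m)) 0)}"
proof -
  define S where "S = (\<Sum>m\<in>{1..N} - {n}. x m)"
  define T where "T = root 3 ((\<rho> n)\<^sup>2 / (4 * real G * (E n)\<^sup>2))"
  define k where "k = \<rho> n / sqrt (real G)"
  define c0 where "c0 = \<rho> n / real G - E n * S + C n + p"
  have "0 < \<rho> n" "0 < E n" "0 < D n" using assms(2,3) by auto
  have "0 \<le> S" unfolding S_def using assms(4) by (intro sum_nonneg) auto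
  have "0 < k" using \<open>0 < \<rho> n\<close> assms(1) by (simp add: k_def)
  have "0 < T" using \<open>0 < \<rho> n\<close> \<open>0 < E n\<close> assms(1) by (simp add: T_def)
  have T3: "T ^ 3 = k\<^sup>2 / (4 * (E n)\<^sup>2)"
    using \<open>0 < \<rho> n\<close> \<open>0 < E n\<close> assms(1) by (simp add: T_def k_def power_divide)
  note shape = inverse_sqrt_plus_linear_strict_mono[OF \<open>0 < k\<close> \<open>0 < E n\<close> \<open>0 < T\<close> T3]
  have cost: "client_cost N G \<rho> E C p n y x =
      (if y + S = 0 then \<infinity> else ereal (k / sqrt (y + S) + E n * (y + S) + c0))" for y
  proof -
    have "sqrt ((y + S) * real G) = sqrt (y + S) * sqrt (real G)"
      by (rule real_sqrt_mult)
    then show ?thesis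
      unfolding client_cost_def Let_def S_def[symmetric]
      using assms(1) by (simp add: k_def c0_def field_simps)
  qed
  show ?thesis
    unfolding S_def[symmetric] T_def[symmetric]
  proof (rule unimodal_minimizers_eq_clamp)
    show "0 \<le> D n" using \<open>0 < D n\<close> by simp
  next
    fix y z assume "0 \<le> y" "y < z" "z \<le> T - S"
    then show "client_cost N G \<rho> E C p n z x < client_cost N G \<rho> E C p n y x"
      using shape(1)[of "y + S" "z + S"] \<open>0 \<le> S\<close> by (auto simp: cost)
  next
    fix y z assume "T - S \<le> y" "y < z"
    then show "client_cost N G \<rho> E C p n y x < client_cost N G \<rho> E C p n z x"
      using shape(2)[of "y + S" "z + S"] \<open>0 < T\<close> by (auto simp: cost)
  qed
qed

end
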